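(* Let $n,d\ge 1$, $r\in[0,1]$, $\omega\ge 0$, $\alpha\in(0,1]$, $K_\omega,K_\alpha>0$, and $0<\mu\le L\le L_{\max}\le nL$, with $L_{\max}$ known. Put $\mu^r_{\omega,\alpha}=\frac{rd}{(1-r)K_\omega+rK_\alpha}$ and $K^r=(1-r)K_\omega+rK_\alpha$. For $p,\tau\in(0,1]$ let $$T(p,\tau)=\max\Big\{\sqrt{\tfrac{L}{\alpha p\mu}},\sqrt{\tfrac{L}{\alpha\tau\mu}},\sqrt{\tfrac{\sqrt{LL_{\max}}(\omega+1)\sqrt{\omega\tau}}{\alpha\sqrt n\,\mu}},\sqrt{\tfrac{\sqrt{LL_{\max}}\sqrt{\omega+1}\sqrt{\omega\tau}}{\alpha\sqrt p\sqrt n\,\mu}},\sqrt{\tfrac{L_{\max}\omega(\omega+1)^2p}{n\mu}},\sqrt{\tfrac{L_{\max}\omega}{np\mu}},\tfrac1\alpha,\tfrac1\tau,\omega+1,\tfrac1p\Big\}$$ and $M(p,\tau)=\big((1-r)K_\omega+r(K_\alpha+pd)\big)\,T(p,\tau)+d$. Choose $$p^\circ=\min\Big\{1,\frac{1}{\mu^r_{\omega,\alpha}},\Big(\frac{Ln}{L_{\max}}\Big)^{1/3}\frac{1}{\omega+1},\max\Big\{\frac1{\omega+1},\Big(\frac{Ln}{L_{\max}}\Big)^{1/2}\frac{1}{\sqrt\alpha(\omega+1)^{3/2}}\Big\}\Big\}\ (1/0=+\infty),$$ $$\tau^\circ=\min\Big\{1,\Big(\frac{Ln}{L_{\max}}\Big)^{1/3}\min\Big\{\frac{1}{\omega+1},\frac{(p^\circ)^{1/3}}{(\omega+1)^{2/3}}\Big\}\Big\}.$$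 Then, up to universal multiplicative constants (and logarithmic factors): (i) $(p^\circ,\tau^\circ)$ minimizes $M(p,\tau)$ over $p,\tau\in(0,1]$; (ii) $T(p^\circ,\tau^\circ)$ is of the order of $$T^{\mathrm{optimistic}}=\max\Big\{\sqrt{\tfrac{L\max\{1,\mu^r_{\omega,\alpha}\}}{\alpha\mu}},\sqrt{\tfrac{L^{2/3}L_{\max}^{1/3}(\omega+1)}{\alpha n^{1/3}\mu}},\sqrt{\tfrac{L^{1/2}L_{\max}^{1/2}(\omega+1)^{3/2}}{\sqrt{\alpha n}\,\mu}},\sqrt{\tfrac{L_{\max}\omega\max\{\omega+1,\mu^r_{\omega,\alpha}\}}{n\mu}},\tfrac1\alpha,\omega+1,\mu^r_{\omega,\alpha}\Big\};$$ (iii) $M(p^\circ,\tau^\circ)$ is of the order of $K^r\,T^{\mathrm{optimistic}}+d$.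
   Context: This concerns the method 2Direction for minimizing $f=\frac1n\sum_{i=1}^n f_i$ over $\mathbb R^d$ with $n$ workers, where each $f_i$ is $L_i$-smooth and convex, $L_{\max}=\max_i L_i$, $f$ is $L$-smooth and $\mu$-strongly convex. Workers use unbiased compressors with variance parameter $\omega$ ($\mathbb E[\mathcal C(x)]=x$, $\mathbb E\|\mathcal C(x)-x\|^2\le\omega\|x\|^2$) and expected density $K_\omega$ (expected density of $\mathcal C$: $\sup_x\mathbb E\|\mathcal C(x)\|_0$); the server uses a biased compressor with contraction parameter $\alpha$ ($\mathbb E\|\mathcal C(x)-x\|^2\le(1-\alpha)\|x\|^2$) and expected density $K_\alpha$. The method has hyper-parameters $p$ (a probability) and $\tau$ (a momentum). Up to logarithmic factors, $T(p,\tau)$ is the number of iterations in the strongly convex case and $M(p,\tau)$ the total communication complexity $(1-r)\cdot(\text{worker-to-server cost})+r\cdot(\text{server-to-worker cost})$, $r\in[0,1]$ weighting the two directions. Here the ratio $L_{\max}/L$ is assumed known and may be used to choose $p,\tau$. "Of the order of" means equal up to universal positive multiplicative constants. *)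

theory Defs
  imports Complex_Main
begin

definition mu_r :: "nat \<Rightarrow> real \<Rightarrow> real \<Rightarrow> real \<Rightarrow> real" where
  "mu_r d r Kw Ka = r * real d / ((1 - r) * Kw + r * Ka)"

definition K_r :: "real \<Rightarrow> real \<Rightarrow> real \<Rightarrow> real" where
  "K_r r Kw Ka = (1 - r) * Kw + r * Ka"

definition T_fun :: "nat \<Rightarrow> real \<Rightarrow> real \<Rightarrow> real \<Rightarrow> real \<Rightarrow> real \<Rightarrow> real \<Rightarrow> real \<Rightarrow> real" where
  "T_fun n w a mu L Lmax p \<tau> = Max {
     sqrt (L / (a * p * mu)),
     sqrt (L / (a * \<tau> * mu)),
     sqrt (sqrt (L * Lmax) * (w + 1) * sqrt (w * \<tau>) / (a * sqrt (real n) * mu)),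
     sqrt (sqrt (L * Lmax) * sqrt (w + 1) * sqrt (w * \<tau>) / (a * sqrt p * sqrt (real n) * mu)),
     sqrt (Lmax * w * (w + 1)^2 * p / (real n * mu)),
     sqrt (Lmax * w / (real n * p * mu)),
     1 / a, 1 / \<tau>, w + 1, 1 / p}"

definition M_fun :: "nat \<Rightarrow> nat \<Rightarrow> real \<Rightarrow> real \<Rightarrow> real \<Rightarrow> real \<Rightarrow> real \<Rightarrow> real \<Rightarrow> real \<Rightarrow> real \<Rightarrow> real \<Rightarrow> real \<Rightarrow> real" where
  "M_fun n d r w a Kw Ka mu L Lmax p \<tau> =
     ((1 - r) * Kw + r * (Ka + p * real d)) * T_fun n w a mu L Lmax p \<tau> + real d"

text \<open>The term 1/mu_r is +infinity when mu_r = 0 (i.e. r = 0); since it sits inside a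
  minimum together with 1, it is then simply dropped, which we encode by replacing it by 1.\<close>
definition p_opt :: "nat \<Rightarrow> nat \<Rightarrow> real \<Rightarrow> real \<Rightarrow> real \<Rightarrow> real \<Rightarrow> real \<Rightarrow> real \<Rightarrow> real \<Rightarrow> real" where
  "p_opt n d r w a Kw Ka L Lmax =
     Min {1,
          (if mu_r d r Kw Ka = 0 then 1 else 1 / mu_r d r Kw Ka),
          (L * real n / Lmax) powr (1/3) / (w + 1),
          max (1 / (w + 1)) ((L * real n / Lmax) powr (1/2) / (sqrt a * (w + 1) powr (3/2)))}"

definition tau_opt :: "nat \<Rightarrow> nat \<Rightarrow> real \<Rightarrow> real \<Rightarrow> real \<Rightarrow> real \<Rightarrow> real \<Rightarrow> real \<Rightarrow> real \<Rightarrow> real" where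
  "tau_opt n d r w a Kw Ka L Lmax =
     min 1 ((L * real n / Lmax) powr (1/3) *
            min (1 / (w + 1)) (p_opt n d r w a Kw Ka L Lmax powr (1/3) / (w + 1) powr (2/3)))"

definition T_optimistic :: "nat \<Rightarrow> nat \<Rightarrow> real \<Rightarrow> real \<Rightarrow> real \<Rightarrow> real \<Rightarrow> real \<Rightarrow> real \<Rightarrow> real \<Rightarrow> real \<Rightarrow> real" where
  "T_optimistic n d r w a Kw Ka mu L Lmax = Max {
     sqrt (L * max 1 (mu_r d r Kw Ka) / (a * mu)),
     sqrt (L powr (2/3) * Lmax powr (1/3) * (w + 1) / (a * real n powr (1/3) * mu)),
     sqrt (L powr (1/2) * Lmax powr (1/2) * (w + 1) powr (3/2) / (sqrt (a * real n) * mu)),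
     sqrt (Lmax * w * max (w + 1) (mu_r d r Kw Ka) / (real n * mu)),
     1 / a, w + 1, mu_r d r Kw Ka}"

end

theory Submission
  imports Defs
begin

text \<open>In logarithmic coordinates every term of \<open>T\<close> and of \<open>T_optimistic\<close> is an affine function of
  \<open>ln L, ln mu, ln a, ln w, ln (w + 1), ln (L n / Lmax), ln mu_r, ln p, ln \<tau>\<close>, and \<open>ln p_opt\<close>,
  \<open>ln tau_opt\<close> are minima and maxima of such functions. Comparing \<open>T(p_opt, tau_opt)\<close> with
  \<open>T_optimistic\<close>, and \<open>T_optimistic\<close> with \<open>(1 + p mu_r) T(p, \<tau>)\<close> for arbitrary admissible
  \<open>p, \<tau>\<close>, therefore reduces to linear
  inequalities, one for each term and each choice of the term attaining \<open>p_opt\<close> and \<open>tau_opt\<close>.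
  Since \<open>M(p, \<tau>) = K_r (1 + p mu_r) T(p, \<tau>) + d\<close> and \<open>p_opt mu_r \<le> 1\<close>, both comparisons transfer
  to \<open>M\<close>, and all claims hold with the constant 8.\<close>

lemma ln_min: "0 < u \<Longrightarrow> 0 < v \<Longrightarrow> ln (min u v) = min (ln u) (ln v)" for u v :: real
  by (simp add: min_def)

lemma ln_max: "0 < u \<Longrightarrow> 0 < v \<Longrightarrow> ln (max u v) = max (ln u) (ln v)" for u v :: real
  by (simp add: max_def)

lemma sqrt_le_iff_ln_le:
  fixes u v :: real
  assumes "0 < u" "0 < v"
  shows "sqrt u \<le> v \<longleftrightarrow> ln u \<le> 2 * ln v"
proof -
  have "sqrt u \<le> v \<longleftrightarrow> u \<le> v\<^sup>2"
    using assms by (metis less_eq_real_def real_le_rsqrt real_sqrt_le_iff real_sqrt_unique sqrt_le_D)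
  also have "\<dots> \<longleftrightarrow> ln u \<le> ln (v\<^sup>2)"
    using assms by simp
  finally show ?thesis
    using assms by (simp add: ln_realpow)
qed

lemma ln_add_le_ln_1_plus_mult:
  fixes x y :: real
  assumes "0 < x" "0 < y"
  shows "ln x + ln y \<le> ln (1 + x * y)"
proof -
  have "ln (x * y) \<le> ln (1 + x * y)"
    using assms by (intro ln_mono) simp_all
  then show ?thesis
    using assms by (simp add: ln_mult)
qed

lemmas ln_simps = ln_sqrt ln_mult ln_div ln_realpow

locale two_direction =
  fixes n d :: nat and r w a Kw Ka mu L Lmax :: real
  assumes n_ge_1: "1 \<le> n" and w_nonneg: "0 \<le> w" and a_pos: "0 < a" and a_le_1: "a \<le> 1"
    and mu_pos: "0 < mu" and mu_le_L: "mu \<le> L" and L_le_Lmax: "L \<le> Lmax"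
    and Lmax_le: "Lmax \<le> real n * L"
    and r_nonneg: "0 \<le> r" and r_le_1: "r \<le> 1" and Kw_pos: "0 < Kw" and Ka_pos: "0 < Ka"
begin

abbreviation "m \<equiv> mu_r d r Kw Ka"
abbreviation "K \<equiv> K_r r Kw Ka"
abbreviation "\<kappa> \<equiv> L * real n / Lmax"
abbreviation "p0 \<equiv> p_opt n d r w a Kw Ka L Lmax"
abbreviation "t0 \<equiv> tau_opt n d r w a Kw Ka L Lmax"
abbreviation "T \<equiv> T_fun n w a mu L Lmax"
abbreviation "Topt \<equiv> T_optimistic n d r w a Kw Ka mu L Lmax"
abbreviation "M \<equiv> M_fun n d r w a Kw Ka mu L Lmax"

lemma K_r_pos: "0 < K"
  using r_nonneg r_le_1 Kw_pos Ka_pos unfolding K_r_def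
  by (cases "r = 0") (auto intro: add_nonneg_pos add_pos_nonneg)

lemma mu_r_nonneg: "0 \<le> m"
  using K_r_pos r_nonneg unfolding mu_r_def K_r_def by simp

lemma M_fun_eq: "M p \<tau> = K * (1 + p * m) * T p \<tau> + real d"
  using K_r_pos unfolding M_fun_def mu_r_def K_r_def by (simp add: field_simps)

lemma params_pos: "0 < real n" "0 < L" "0 < Lmax" "0 < w + 1"
  using n_ge_1 mu_pos mu_le_L L_le_Lmax w_nonneg by auto

lemma kappa_ge_1: "1 \<le> \<kappa>"
  using Lmax_le params_pos by (simp add: mult.commute)

lemma ln_bounds:
  "ln a \<le> 0" "0 \<le> ln \<kappa>" "0 \<le> ln (w + 1)" "ln w \<le> ln (w + 1)" "ln mu \<le> ln L"
  using a_pos a_le_1 kappa_ge_1 w_nonneg mu_pos mu_le_L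
  by (auto simp: ln_ge_zero) (cases "w = 0"; simp)

lemma p_opt_eq:
  "p0 = min 1 (min (if m = 0 then 1 else 1 / m)
     (min (\<kappa> powr (1/3) / (w + 1)) (max (1 / (w + 1)) (\<kappa> powr (1/2) / (sqrt a * (w + 1) powr (3/2))))))"
  by (simp add: p_opt_def)

lemma p_opt_pos: "0 < p0"
  using mu_r_nonneg kappa_ge_1 params_pos a_pos by (simp add: p_opt_eq less_max_iff_disj)

lemma p_opt_le_1: "p0 \<le> 1"
  by (simp add: p_opt_eq)

lemma p_opt_mult_mu_r_le_1: "p0 * m \<le> 1"
proof (cases "m = 0")
  case False
  then have "p0 \<le> 1 / m"
    by (simp add: p_opt_eq)
  then show ?thesis
    using False mu_r_nonneg by (simp add: le_divide_eq mult.commute)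
qed simp

text \<open>As \<open>ln 0 = 0\<close>, the branch \<open>m = 0\<close> of the second term also has logarithm \<open>- ln m\<close>.\<close>

lemma ln_p_opt:
  "ln p0 = min 0 (min (- ln m) (min (ln \<kappa> / 3 - ln (w + 1))
     (max (- ln (w + 1)) ((ln \<kappa> - ln a - 3 * ln (w + 1)) / 2))))"
proof -
  define c1 where "c1 = (if m = 0 then 1 else 1 / m)"
  define c2 where "c2 = \<kappa> powr (1/3) / (w + 1)"
  define c3 where "c3 = 1 / (w + 1)"
  define c4 where "c4 = \<kappa> powr (1/2) / (sqrt a * (w + 1) powr (3/2))"
  have "0 < c1" "0 < c2" "0 < c3" "0 < c4"
    using mu_r_nonneg kappa_ge_1 params_pos a_pos by (simp_all add: c1_def c2_def c3_def c4_def)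
  then have "ln p0 = min 0 (min (ln c1) (min (ln c2) (max (ln c3) (ln c4))))"
    by (simp add: p_opt_eq ln_min ln_max flip: c1_def c2_def c3_def c4_def)
  moreover have "ln c1 = - ln m"
    by (simp add: c1_def ln_div)
  moreover have "ln c2 = ln \<kappa> / 3 - ln (w + 1)" "ln c3 = - ln (w + 1)"
    "ln c4 = (ln \<kappa> - ln a - 3 * ln (w + 1)) / 2"
    using kappa_ge_1 params_pos a_pos w_nonneg by (simp_all add: c2_def c3_def c4_def ln_simps)
  ultimately show ?thesis
    by simp
qed

lemma ln_p_opt_le:
  "ln p0 \<le> 0" "ln p0 \<le> - ln m" "3 * ln p0 \<le> ln \<kappa> - 3 * ln (w + 1)"
  "ln p0 \<le> - ln (w + 1) \<or> 2 * ln p0 \<le> ln \<kappa> - ln a - 3 * ln (w + 1)"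
  unfolding ln_p_opt by (auto simp: min_def max_def)

lemma ln_p_opt_cases:
  "ln p0 = 0 \<or> ln p0 = - ln m \<or> 3 * ln p0 = ln \<kappa> - 3 * ln (w + 1) \<or>
   (- ln (w + 1) \<le> ln p0 \<and> ln \<kappa> - ln a - 3 * ln (w + 1) \<le> 2 * ln p0)"
  unfolding ln_p_opt by (auto simp: min_def max_def)

lemma tau_opt_eq:
  "t0 = min 1 (min (\<kappa> powr (1/3) / (w + 1)) (\<kappa> powr (1/3) * p0 powr (1/3) / (w + 1) powr (2/3)))"
  using kappa_ge_1 by (simp add: tau_opt_def min_mult_distrib_left)

lemma tau_opt_pos: "0 < t0" and tau_opt_le_1: "t0 \<le> 1"
  using kappa_ge_1 params_pos p_opt_pos by (simp_all add: tau_opt_eq)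

lemma ln_tau_opt:
  "ln t0 = min 0 (min (ln \<kappa> / 3 - ln (w + 1)) ((ln \<kappa> + ln p0 - 2 * ln (w + 1)) / 3))"
proof -
  define c1 where "c1 = \<kappa> powr (1/3) / (w + 1)"
  define c2 where "c2 = \<kappa> powr (1/3) * p0 powr (1/3) / (w + 1) powr (2/3)"
  have "0 < c1" "0 < c2"
    using kappa_ge_1 params_pos p_opt_pos by (simp_all add: c1_def c2_def)
  then have "ln t0 = min 0 (min (ln c1) (ln c2))"
    by (simp add: tau_opt_eq ln_min flip: c1_def c2_def)
  moreover have "ln c1 = ln \<kappa> / 3 - ln (w + 1)" "ln c2 = (ln \<kappa> + ln p0 - 2 * ln (w + 1)) / 3"
    using kappa_ge_1 params_pos p_opt_pos w_nonneg by (simp_all add: c1_def c2_def ln_simps)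
  ultimately show ?thesis
    by simp
qed

lemma ln_tau_opt_le:
  "ln t0 \<le> 0" "3 * ln t0 \<le> ln \<kappa> - 3 * ln (w + 1)" "3 * ln t0 \<le> ln \<kappa> + ln p0 - 2 * ln (w + 1)"
  unfolding ln_tau_opt by (auto simp: min_def)

lemma ln_tau_opt_cases:
  "ln t0 = 0 \<or> 3 * ln t0 = ln \<kappa> - 3 * ln (w + 1) \<or> 3 * ln t0 = ln \<kappa> + ln p0 - 2 * ln (w + 1)"
  unfolding ln_tau_opt by (auto simp: min_def)

lemma T_fun_pos: "0 < T p \<tau>"
proof -
  have "w + 1 \<le> T p \<tau>"
    unfolding T_fun_def by (intro Max_ge) simp_all
  then show ?thesis
    using params_pos by linarith
qed

lemma ln_T_fun_term: "0 < q \<Longrightarrow> ln (L / (a * q * mu)) = ln L - ln mu - ln a - ln q"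
  using params_pos a_pos mu_pos by (simp add: ln_simps)

lemma ln_T_fun_w_terms:
  assumes p: "0 < p" and \<tau>: "0 < \<tau>" and w: "0 < w"
  shows "2 * ln (sqrt (L * Lmax) * (w + 1) * sqrt (w * \<tau>) / (a * sqrt (real n) * mu))
       = 2 * ln L - 2 * ln mu - 2 * ln a + 2 * ln (w + 1) + ln w + ln \<tau> - ln \<kappa>"
    and "2 * ln (sqrt (L * Lmax) * sqrt (w + 1) * sqrt (w * \<tau>) / (a * sqrt p * sqrt (real n) * mu))
       = 2 * ln L - 2 * ln mu - 2 * ln a + ln (w + 1) + ln w + ln \<tau> - ln p - ln \<kappa>"
    and "ln (Lmax * w * (w + 1)^2 * p / (real n * mu))
       = ln L - ln mu + ln w + 2 * ln (w + 1) + ln p - ln \<kappa>"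
    and "ln (Lmax * w / (real n * p * mu)) = ln L - ln mu + ln w - ln p - ln \<kappa>"
  using params_pos a_pos mu_pos p \<tau> w by (simp_all add: ln_simps add_divide_distrib)

lemma ln_T_fun_ge:
  assumes p: "0 < p" and \<tau>: "0 < \<tau>"
  shows "ln L - ln mu - ln a - ln p \<le> 2 * ln (T p \<tau>)"
    and "ln L - ln mu - ln a - ln \<tau> \<le> 2 * ln (T p \<tau>)"
    and "0 < w \<Longrightarrow> 2 * ln L - 2 * ln mu - 2 * ln a + 2 * ln (w + 1) + ln w + ln \<tau> - ln \<kappa> \<le> 4 * ln (T p \<tau>)"
    and "0 < w \<Longrightarrow> ln L - ln mu + ln w + 2 * ln (w + 1) + ln p - ln \<kappa> \<le> 2 * ln (T p \<tau>)"
    and "0 < w \<Longrightarrow> ln L - ln mu + ln w - ln p - ln \<kappa> \<le> 2 * ln (T p \<tau>)"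
    and "- ln a \<le> ln (T p \<tau>)" "ln (w + 1) \<le> ln (T p \<tau>)" "- ln p \<le> ln (T p \<tau>)"
proof -
  have ge: "sqrt (L / (a * p * mu)) \<le> T p \<tau>" "sqrt (L / (a * \<tau> * mu)) \<le> T p \<tau>"
    "sqrt (sqrt (L * Lmax) * (w + 1) * sqrt (w * \<tau>) / (a * sqrt (real n) * mu)) \<le> T p \<tau>"
    "sqrt (Lmax * w * (w + 1)^2 * p / (real n * mu)) \<le> T p \<tau>"
    "sqrt (Lmax * w / (real n * p * mu)) \<le> T p \<tau>"
    "1 / a \<le> T p \<tau>" "w + 1 \<le> T p \<tau>" "1 / p \<le> T p \<tau>"
    unfolding T_fun_def by (intro Max_ge; simp only: finite.insertI finite.emptyI insert_iff simp_thms)+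
  have ln_ge: "ln u \<le> 2 * ln (T p \<tau>)" if "0 < u" "sqrt u \<le> T p \<tau>" for u
    using that T_fun_pos sqrt_le_iff_ln_le by blast
  show "ln L - ln mu - ln a - ln p \<le> 2 * ln (T p \<tau>)" "ln L - ln mu - ln a - ln \<tau> \<le> 2 * ln (T p \<tau>)"
    using ln_ge[OF _ ge(1)] ln_ge[OF _ ge(2)] ln_T_fun_term[OF p] ln_T_fun_term[OF \<tau>]
      params_pos a_pos mu_pos p \<tau> by simp_all
  show "- ln a \<le> ln (T p \<tau>)" "ln (w + 1) \<le> ln (T p \<tau>)" "- ln p \<le> ln (T p \<tau>)"
    using ge(6-8) ln_le_cancel_iff[of "1 / a" "T p \<tau>"] ln_le_cancel_iff[of "1 / p" "T p \<tau>"]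
      T_fun_pos a_pos p params_pos by (simp_all add: ln_div)
  assume w: "0 < w"
  show "2 * ln L - 2 * ln mu - 2 * ln a + 2 * ln (w + 1) + ln w + ln \<tau> - ln \<kappa> \<le> 4 * ln (T p \<tau>)"
    using ln_ge[OF _ ge(3)] ln_T_fun_w_terms(1)[OF p \<tau> w] params_pos a_pos mu_pos \<tau> w by simp
  show "ln L - ln mu + ln w + 2 * ln (w + 1) + ln p - ln \<kappa> \<le> 2 * ln (T p \<tau>)"
    "ln L - ln mu + ln w - ln p - ln \<kappa> \<le> 2 * ln (T p \<tau>)"
    using ln_ge[OF _ ge(4)] ln_ge[OF _ ge(5)] ln_T_fun_w_terms(3,4)[OF p \<tau> w] params_pos mu_pos p w
    by simp_all
qed

lemma T_fun_le_if_ln_le: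
  assumes p: "0 < p" and \<tau>: "0 < \<tau>" and V: "0 < V"
    and "ln L - ln mu - ln a - ln p \<le> 2 * ln V"
    and "ln L - ln mu - ln a - ln \<tau> \<le> 2 * ln V"
    and "0 < w \<Longrightarrow> 2 * ln L - 2 * ln mu - 2 * ln a + 2 * ln (w + 1) + ln w + ln \<tau> - ln \<kappa> \<le> 4 * ln V"
    and "0 < w \<Longrightarrow> 2 * ln L - 2 * ln mu - 2 * ln a + ln (w + 1) + ln w + ln \<tau> - ln p - ln \<kappa> \<le> 4 * ln V"
    and "0 < w \<Longrightarrow> ln L - ln mu + ln w + 2 * ln (w + 1) + ln p - ln \<kappa> \<le> 2 * ln V"
    and "0 < w \<Longrightarrow> ln L - ln mu + ln w - ln p - ln \<kappa> \<le> 2 * ln V"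
    and "- ln a \<le> ln V" "- ln \<tau> \<le> ln V" "ln (w + 1) \<le> ln V" "- ln p \<le> ln V"
  shows "T p \<tau> \<le> V"
proof -
  have sqrt_le: "sqrt u \<le> V" if "0 < u" "ln u \<le> 2 * ln V" for u
    using that V sqrt_le_iff_ln_le by blast
  have inverse_le: "1 / u \<le> V" if "0 < u" "- ln u \<le> ln V" for u
    using that V ln_le_cancel_iff[of "1 / u" V] by (simp add: ln_div)
  have w_terms: "sqrt (sqrt (L * Lmax) * (w + 1) * sqrt (w * \<tau>) / (a * sqrt (real n) * mu)) \<le> V \<and>
    sqrt (sqrt (L * Lmax) * sqrt (w + 1) * sqrt (w * \<tau>) / (a * sqrt p * sqrt (real n) * mu)) \<le> V \<and>
    sqrt (Lmax * w * (w + 1)^2 * p / (real n * mu)) \<le> V \<and> sqrt (Lmax * w / (real n * p * mu)) \<le> V"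
  proof (cases "w = 0")
    case False
    then have w: "0 < w"
      using w_nonneg by simp
    show ?thesis
      using assms(6-9)[OF w] ln_T_fun_w_terms[OF p \<tau> w] params_pos a_pos mu_pos p \<tau> w
      by (intro conjI sqrt_le; (linarith | simp))
  qed (use V in simp)
  have "sqrt (L / (a * p * mu)) \<le> V" "sqrt (L / (a * \<tau> * mu)) \<le> V"
    using assms(4,5) ln_T_fun_term[OF p] ln_T_fun_term[OF \<tau>] params_pos a_pos mu_pos p \<tau>
    by (intro sqrt_le; simp)+
  moreover have "1 / a \<le> V" "1 / \<tau> \<le> V" "w + 1 \<le> V" "1 / p \<le> V"
    using inverse_le assms(10-13) a_pos p \<tau> V params_pos by simp_all
  ultimately show ?thesis
    unfolding T_fun_def using w_terms by (intro Max.boundedI) auto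
qed

lemma T_optimistic_pos: "0 < Topt"
proof -
  have "w + 1 \<le> Topt"
    unfolding T_optimistic_def by (intro Max_ge) simp_all
  then show ?thesis
    using params_pos by linarith
qed

lemma ln_T_optimistic_terms:
  shows "ln (L * max 1 m / (a * mu)) = ln L - ln mu - ln a + max 0 (ln m)"
    and "3 * ln (L powr (2/3) * Lmax powr (1/3) * (w + 1) / (a * real n powr (1/3) * mu))
       = 3 * ln L - 3 * ln mu - 3 * ln a + 3 * ln (w + 1) - ln \<kappa>"
    and "2 * ln (L powr (1/2) * Lmax powr (1/2) * (w + 1) powr (3/2) / (sqrt (a * real n) * mu))
       = 2 * ln L - 2 * ln mu - ln a + 3 * ln (w + 1) - ln \<kappa>"
    and "0 < w \<Longrightarrow> ln (Lmax * w * max (w + 1) m / (real n * mu))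
       = ln L - ln mu + ln w + max (ln (w + 1)) (ln m) - ln \<kappa>"
proof -
  have ln_max_m: "ln (max u m) = max (ln u) (ln m)" if "1 \<le> u" for u
    using that mu_r_nonneg by (cases "m = 0") (auto simp: max_def)
  have "max 1 m \<noteq> 0" "max (w + 1) m \<noteq> 0"
    using w_nonneg by (simp_all add: max_def)
  with ln_max_m[of 1] ln_max_m[of "w + 1"]
  show "ln (L * max 1 m / (a * mu)) = ln L - ln mu - ln a + max 0 (ln m)"
    "0 < w \<Longrightarrow> ln (Lmax * w * max (w + 1) m / (real n * mu))
       = ln L - ln mu + ln w + max (ln (w + 1)) (ln m) - ln \<kappa>"
    using params_pos a_pos mu_pos w_nonneg by (simp_all add: ln_simps)
  show "3 * ln (L powr (2/3) * Lmax powr (1/3) * (w + 1) / (a * real n powr (1/3) * mu))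
       = 3 * ln L - 3 * ln mu - 3 * ln a + 3 * ln (w + 1) - ln \<kappa>"
    "2 * ln (L powr (1/2) * Lmax powr (1/2) * (w + 1) powr (3/2) / (sqrt (a * real n) * mu))
       = 2 * ln L - 2 * ln mu - ln a + 3 * ln (w + 1) - ln \<kappa>"
    using params_pos a_pos mu_pos w_nonneg by (simp_all add: ln_simps add_divide_distrib)
qed

lemma ln_T_optimistic_ge:
  shows "ln L - ln mu - ln a \<le> 2 * ln Topt" "ln L - ln mu - ln a + ln m \<le> 2 * ln Topt"
    and "3 * ln L - 3 * ln mu - 3 * ln a + 3 * ln (w + 1) - ln \<kappa> \<le> 6 * ln Topt"
    and "2 * ln L - 2 * ln mu - ln a + 3 * ln (w + 1) - ln \<kappa> \<le> 4 * ln Topt"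
    and "0 < w \<Longrightarrow> ln L - ln mu + ln w + ln (w + 1) - ln \<kappa> \<le> 2 * ln Topt"
    and "0 < w \<Longrightarrow> ln L - ln mu + ln w + ln m - ln \<kappa> \<le> 2 * ln Topt"
    and "- ln a \<le> ln Topt" "ln (w + 1) \<le> ln Topt" "ln m \<le> ln Topt"
proof -
  have ge: "sqrt (L * max 1 m / (a * mu)) \<le> Topt"
    "sqrt (L powr (2/3) * Lmax powr (1/3) * (w + 1) / (a * real n powr (1/3) * mu)) \<le> Topt"
    "sqrt (L powr (1/2) * Lmax powr (1/2) * (w + 1) powr (3/2) / (sqrt (a * real n) * mu)) \<le> Topt"
    "sqrt (Lmax * w * max (w + 1) m / (real n * mu)) \<le> Topt"
    "1 / a \<le> Topt" "w + 1 \<le> Topt" "m \<le> Topt"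
    unfolding T_optimistic_def by (intro Max_ge; simp only: finite.insertI finite.emptyI insert_iff simp_thms)+
  have ln_ge: "ln u \<le> 2 * ln Topt" if "0 < u" "sqrt u \<le> Topt" for u
    using that T_optimistic_pos sqrt_le_iff_ln_le by blast
  show "ln L - ln mu - ln a \<le> 2 * ln Topt" "ln L - ln mu - ln a + ln m \<le> 2 * ln Topt"
    using ln_ge[OF _ ge(1)] params_pos a_pos mu_pos ln_T_optimistic_terms(1) by simp_all
  show "3 * ln L - 3 * ln mu - 3 * ln a + 3 * ln (w + 1) - ln \<kappa> \<le> 6 * ln Topt"
    using ln_ge[OF _ ge(2)] params_pos a_pos mu_pos ln_T_optimistic_terms(2) by simp
  show "2 * ln L - 2 * ln mu - ln a + 3 * ln (w + 1) - ln \<kappa> \<le> 4 * ln Topt"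
    using ln_ge[OF _ ge(3)] params_pos a_pos mu_pos ln_T_optimistic_terms(3) by simp
  show "ln L - ln mu + ln w + ln (w + 1) - ln \<kappa> \<le> 2 * ln Topt"
    "ln L - ln mu + ln w + ln m - ln \<kappa> \<le> 2 * ln Topt" if "0 < w"
    using ln_ge[OF _ ge(4)] ln_T_optimistic_terms(4)[OF that] params_pos mu_pos that
    by (simp_all add: less_max_iff_disj)
  show "- ln a \<le> ln Topt" "ln (w + 1) \<le> ln Topt"
    using ge(5,6) ln_le_cancel_iff[of "1 / a" Topt] a_pos T_optimistic_pos params_pos
    by (simp_all add: ln_div)
  show "ln m \<le> ln Topt"
    using ge(6,7) T_optimistic_pos mu_r_nonneg w_nonneg by (cases "m = 0") auto
qed

lemma T_optimistic_le_if_ln_le: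
  assumes V: "0 < V"
    and "ln L - ln mu - ln a \<le> 2 * ln V" "ln L - ln mu - ln a + ln m \<le> 2 * ln V"
    and "3 * ln L - 3 * ln mu - 3 * ln a + 3 * ln (w + 1) - ln \<kappa> \<le> 6 * ln V"
    and "2 * ln L - 2 * ln mu - ln a + 3 * ln (w + 1) - ln \<kappa> \<le> 4 * ln V"
    and "0 < w \<Longrightarrow> ln L - ln mu + ln w + ln (w + 1) - ln \<kappa> \<le> 2 * ln V"
    and "0 < w \<Longrightarrow> ln L - ln mu + ln w + ln m - ln \<kappa> \<le> 2 * ln V"
    and "- ln a \<le> ln V" "ln (w + 1) \<le> ln V" "ln m \<le> ln V"
  shows "Topt \<le> V"
proof -
  note terms = ln_T_optimistic_terms
  have sqrt_le: "sqrt u \<le> V" if "0 < u" "ln u \<le> 2 * ln V" for u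
    using that V sqrt_le_iff_ln_le by blast
  have max_terms: "ln L - ln mu - ln a + max 0 (ln m) \<le> 2 * ln V"
    "0 < w \<Longrightarrow> ln L - ln mu + ln w + max (ln (w + 1)) (ln m) - ln \<kappa> \<le> 2 * ln V"
    using assms(2,3,6,7) by (auto simp: max_def)
  have w_term: "sqrt (Lmax * w * max (w + 1) m / (real n * mu)) \<le> V"
  proof (cases "w = 0")
    case False
    then have w: "0 < w"
      using w_nonneg by simp
    show ?thesis
      using max_terms(2)[OF w] terms(4)[OF w] params_pos mu_pos w
      by (intro sqrt_le; (linarith | simp add: less_max_iff_disj))
  qed (use V in simp)
  have "sqrt (L * max 1 m / (a * mu)) \<le> V"
    "sqrt (L powr (2/3) * Lmax powr (1/3) * (w + 1) / (a * real n powr (1/3) * mu)) \<le> V"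
    "sqrt (L powr (1/2) * Lmax powr (1/2) * (w + 1) powr (3/2) / (sqrt (a * real n) * mu)) \<le> V"
    using max_terms(1) assms(4,5) terms(1-3) params_pos a_pos mu_pos w_nonneg
    by (intro sqrt_le; (linarith | simp add: less_max_iff_disj))+
  moreover have "1 / a \<le> V" "w + 1 \<le> V"
    using assms(8,9) ln_le_cancel_iff[of "1 / a" V] a_pos V params_pos by (simp_all add: ln_div)
  moreover have "m \<le> V"
    using assms(10) mu_r_nonneg V by (cases "m = 0") auto
  ultimately show ?thesis
    unfolding T_optimistic_def using w_term by (intro Max.boundedI) auto
qed

lemma T_fun_opt_le_T_optimistic: "T p0 t0 \<le> Topt"
  using ln_p_opt_le ln_p_opt_cases ln_tau_opt_le ln_tau_opt_cases ln_T_optimistic_ge ln_bounds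
  by (intro T_fun_le_if_ln_le[OF p_opt_pos tau_opt_pos T_optimistic_pos])
    (elim disjE conjE; linarith)+

lemma ln_T_optimistic_terms_le_T_fun:
  assumes p: "0 < p" "p \<le> 1" and \<tau>: "0 < \<tau>" "\<tau> \<le> 1"
  shows "3 * ln L - 3 * ln mu - 3 * ln a + 3 * ln (w + 1) - ln \<kappa> \<le> 6 * ln (T p \<tau>) + 3 * ln 2 \<and>
    2 * ln L - 2 * ln mu - ln a + 3 * ln (w + 1) - ln \<kappa> \<le> 4 * ln (T p \<tau>) + 3 * ln 2"
proof -
  note lt = ln_T_fun_ge[OF p(1) \<tau>(1)]
  have ln_p_tau: "ln p \<le> 0" "ln \<tau> \<le> 0"
    using p \<tau> by simp_all
  show ?thesis
  proof (cases "1 \<le> w")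
    case True
    then have w: "0 < w" and "ln ((w + 1) / 2) \<le> ln w"
      by simp_all
    then have "ln (w + 1) - ln 2 \<le> ln w"
      by (simp add: ln_div)
    then show ?thesis
      using lt(1,2) lt(3,4)[OF w] ln_p_tau ln_bounds by (intro conjI) linarith+
  next
    case False
    then have "ln (w + 1) \<le> ln 2"
      using w_nonneg by simp
    then show ?thesis
      using lt(1) ln_p_tau ln_bounds by (intro conjI) linarith+
  qed
qed

lemma T_optimistic_le_T_fun:
  assumes p: "0 < p" "p \<le> 1" and \<tau>: "0 < \<tau>" "\<tau> \<le> 1"
  shows "Topt \<le> 4 * (1 + p * m) * T p \<tau>"
proof -
  note lt = ln_T_fun_ge[OF p(1) \<tau>(1)]
  have pm: "0 \<le> p * m"
    using p mu_r_nonneg by simp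
  have ln_R: "ln (4 * (1 + p * m) * T p \<tau>) = 2 * ln 2 + ln (1 + p * m) + ln (T p \<tau>)"
  proof -
    have "ln (4 * (1 + p * m) * T p \<tau>) = ln 4 + ln (1 + p * m) + ln (T p \<tau>)"
      using T_fun_pos[of p \<tau>] pm by (simp add: ln_mult del: distrib_left_numeral)
    moreover have "ln (4 :: real) = 2 * ln 2"
      using ln_realpow[of 2 2] by simp
    ultimately show ?thesis
      by simp
  qed
  have ln_1_pm: "0 \<le> ln (1 + p * m)" "ln p + ln m \<le> ln (1 + p * m)"
  proof -
    show "0 \<le> ln (1 + p * m)"
      using pm by simp
    show "ln p + ln m \<le> ln (1 + p * m)"
    proof (cases "m = 0")
      case False
      then show ?thesis
        using mu_r_nonneg by (intro ln_add_le_ln_1_plus_mult[OF p(1)]) simp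
    qed (use p in simp)
  qed
  note w_power_terms = ln_T_optimistic_terms_le_T_fun[OF p \<tau>]
  have "0 \<le> ln (2 :: real)" "ln p \<le> 0"
    using p by simp_all
  note ln_facts = this w_power_terms[THEN conjunct1] w_power_terms[THEN conjunct2] lt(1,6-8) ln_R ln_1_pm ln_bounds
  show ?thesis
  proof (rule T_optimistic_le_if_ln_le)
    show "0 < 4 * (1 + p * m) * T p \<tau>"
      using pm T_fun_pos[of p \<tau>] by simp
    show "ln L - ln mu + ln w + ln (w + 1) - ln \<kappa> \<le> 2 * ln (4 * (1 + p * m) * T p \<tau>)"
      if "0 < w" using lt(4,5)[OF that] ln_facts by linarith
    show "ln L - ln mu + ln w + ln m - ln \<kappa> \<le> 2 * ln (4 * (1 + p * m) * T p \<tau>)"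
      if "0 < w" using lt(5)[OF that] ln_facts by linarith
  qed (use ln_facts in linarith)+
qed

lemma T_optimistic_le_T_fun_opt: "Topt \<le> 8 * T p0 t0"
proof -
  have "Topt \<le> 4 * (1 + p0 * m) * T p0 t0"
    using T_optimistic_le_T_fun p_opt_pos p_opt_le_1 tau_opt_pos tau_opt_le_1 by blast
  also have "\<dots> \<le> 4 * 2 * T p0 t0"
    using p_opt_mult_mu_r_le_1 T_fun_pos[of p0 t0] by (intro mult_right_mono) auto
  finally show ?thesis
    by simp
qed

lemma K_r_T_optimistic_le_M_fun:
  assumes "0 < p" "p \<le> 1" "0 < \<tau>" "\<tau> \<le> 1"
  shows "K * Topt + real d \<le> 4 * M p \<tau>"
proof -
  have "K * Topt \<le> K * (4 * (1 + p * m) * T p \<tau>)"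
    using T_optimistic_le_T_fun[OF assms] K_r_pos by (intro mult_left_mono) auto
  also have "\<dots> = 4 * (K * (1 + p * m) * T p \<tau>)"
    by (simp add: ac_simps)
  finally show ?thesis
    unfolding M_fun_eq by (simp add: algebra_simps)
qed

lemma M_fun_opt_le: "M p0 t0 \<le> 2 * (K * Topt + real d)"
proof -
  have "(1 + p0 * m) * T p0 t0 \<le> 2 * T p0 t0"
    using p_opt_mult_mu_r_le_1 T_fun_pos[of p0 t0] by (intro mult_right_mono) auto
  also have "\<dots> \<le> 2 * Topt"
    using T_fun_opt_le_T_optimistic by simp
  finally have "K * ((1 + p0 * m) * T p0 t0) \<le> K * (2 * Topt)"
    using K_r_pos by (intro mult_left_mono) auto
  then show ?thesis
    unfolding M_fun_eq by (simp add: algebra_simps)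
qed

lemma order_bounds:
  "(\<forall>p \<tau>. 0 < p \<longrightarrow> p \<le> 1 \<longrightarrow> 0 < \<tau> \<longrightarrow> \<tau> \<le> 1 \<longrightarrow> M p0 t0 \<le> 8 * M p \<tau>)
   \<and> T p0 t0 \<le> 8 * Topt \<and> Topt \<le> 8 * T p0 t0
   \<and> M p0 t0 \<le> 8 * (K * Topt + real d) \<and> K * Topt + real d \<le> 8 * M p0 t0"
proof -
  have "0 \<le> K * Topt"
    using T_optimistic_pos K_r_pos by simp
  then show ?thesis
    using M_fun_opt_le K_r_T_optimistic_le_M_fun T_fun_opt_le_T_optimistic T_optimistic_le_T_fun_opt
      K_r_T_optimistic_le_M_fun[OF p_opt_pos p_opt_le_1 tau_opt_pos tau_opt_le_1] T_optimistic_pos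
    by force
qed

end

theorem theorem3:
  shows "\<exists>C::real. C > 0 \<and>
    (\<forall>(n::nat) (d::nat) (r::real) (w::real) (a::real) (Kw::real) (Ka::real)
       (mu::real) (L::real) (Lmax::real).
      n \<ge> 1 \<longrightarrow> d \<ge> 1 \<longrightarrow> 0 \<le> r \<longrightarrow> r \<le> 1 \<longrightarrow> w \<ge> 0 \<longrightarrow>
      0 < a \<longrightarrow> a \<le> 1 \<longrightarrow> Kw > 0 \<longrightarrow> Ka > 0 \<longrightarrow>
      0 < mu \<longrightarrow> mu \<le> L \<longrightarrow> L \<le> Lmax \<longrightarrow> Lmax \<le> real n * L \<longrightarrow>
      (let p0 = p_opt n d r w a Kw Ka L Lmax;
           t0 = tau_opt n d r w a Kw Ka L Lmax;
           Topt = T_optimistic n d r w a Kw Ka mu L Lmax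
       in (\<forall>p \<tau>. 0 < p \<longrightarrow> p \<le> 1 \<longrightarrow> 0 < \<tau> \<longrightarrow> \<tau> \<le> 1 \<longrightarrow>
              M_fun n d r w a Kw Ka mu L Lmax p0 t0 \<le> C * M_fun n d r w a Kw Ka mu L Lmax p \<tau>)
        \<and> T_fun n w a mu L Lmax p0 t0 \<le> C * Topt
        \<and> Topt \<le> C * T_fun n w a mu L Lmax p0 t0
        \<and> M_fun n d r w a Kw Ka mu L Lmax p0 t0 \<le> C * (K_r r Kw Ka * Topt + real d)
        \<and> K_r r Kw Ka * Topt + real d \<le> C * M_fun n d r w a Kw Ka mu L Lmax p0 t0))"
  using two_direction.order_bounds unfolding two_direction_def Let_def
  by (intro exI[of _ 8]) simp

end
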